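(* The following system $\mathsf{Q}$ is sound for $\mathcal{Q}(\mathrm{FO})$ and $\mathcal{Q}(\mathrm{QBF})$ (with lax semantics), writing $\varphi\Leftrightarrow\psi$ for $(\varphi\Rightarrow\psi)$ and $(\psi\Rightarrow\varphi)$ combined by the team-level conjunction: (Lin$\forall$) $\forall x\sim\varphi\Leftrightarrow\sim\forall x\varphi$; (F$\exists$) $\exists x\alpha\Leftrightarrow\neg\forall x\neg\alpha$ for classical $\alpha$; (D$\exists\otimes$) $\exists x(\varphi\otimes\psi)\Leftrightarrow\exists x\varphi\otimes\exists x\psi$; (E$\forall$) $\forall x\alpha\Rightarrow\, !x\,\alpha$ for classical $\alpha$; (I$\forall$) $!x\,\psi\Rightarrow\forall x\psi$; (Dis$\forall$) $\forall x(\varphi\Rightarrow\psi)\Rightarrow(\forall x\varphi\Rightarrow\forall x\psi)$; (Dis$!$) $!x(\varphi\Rightarrow\psi)\Rightarrow(!x\varphi\Rightarrow\, !x\psi)$; and the rule: from a theorem $\varphi$ infer $!x\,\varphi$.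
   Context: $\Rightarrow$ is the team-semantic material implication ($A\models\varphi\Rightarrow\psi$ iff $A\not\models\varphi$ or $A\models\psi$), $\sim$ the strong negation, $\otimes$ the splitting disjunction ($\varphi\otimes\psi := \sim(\varphi\multimap\sim\psi)$, i.e. the team splits as $S\cup U$ with $S\models\varphi$, $U\models\psi$). $\mathcal{Q}(\mathcal{L})$ is the closure of $\mathcal{L}$ under $\sim$, $\Rightarrow$, $\multimap$ and team quantifiers $\forall x$, $!x$ (shriek), with $\exists x\varphi:=\sim !x\sim\varphi$. For a structure $\mathcal{A}$ with domain $A$ and team $T$: $(\mathcal{A},T)\models\forall x\varphi$ iff the duplicating team $T[A/x]=\{s^x_a\mid s\in T,a\in A\}$ satisfies $\varphi$; $(\mathcal{A},T)\models\, !x\varphi$ iff $T[f/x]=\{s^x_a\mid s\in T,a\in f(s)\}$ satisfies $\varphi$ for every supplementing function $f:T\to\mathfrak{P}(A)\setminus\{\emptyset\}$ (lax semantics). For $\mathcal{Q}(\mathrm{QBF})$ the domain is $\{0,1\}$. *)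

theory Defs
  imports Main
begin

type_synonym var = nat

datatype 'b qf =
    Cl 'b
  | Tl "'b qf"                  (* strong (contradictory) negation ~ *)
  | Imp "'b qf" "'b qf"
  | Lolli "'b qf" "'b qf"       (* -o, dual of the splitting disjunction *)
  | TAll var "'b qf"
  | Shriek var "'b qf"          (* shriek quantifier !x (lax) *)

definition dup :: "'a set \<Rightarrow> var \<Rightarrow> (var \<Rightarrow> 'a) set \<Rightarrow> (var \<Rightarrow> 'a) set" where
  "dup A x T = {s(x := a) | s a. s \<in> T \<and> a \<in> A}"

definition supfun :: "'a set \<Rightarrow> (var \<Rightarrow> 'a) set \<Rightarrow> ((var \<Rightarrow> 'a) \<Rightarrow> 'a set) \<Rightarrow> bool" where
  "supfun A T f = (\<forall>s\<in>T. f s \<noteq> {} \<and> f s \<subseteq> A)"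

definition supp :: "var \<Rightarrow> ((var \<Rightarrow> 'a) \<Rightarrow> 'a set) \<Rightarrow> (var \<Rightarrow> 'a) set \<Rightarrow> (var \<Rightarrow> 'a) set" where
  "supp x f T = {s(x := a) | s a. s \<in> T \<and> a \<in> f s}"

text \<open>Team semantics; base formulas are flat: a team satisfies a classical
  formula iff every assignment in it does (M is the Tarskian satisfaction).\<close>

fun qsat :: "'a set \<Rightarrow> ('b \<Rightarrow> (var \<Rightarrow> 'a) \<Rightarrow> bool) \<Rightarrow> (var \<Rightarrow> 'a) set \<Rightarrow> 'b qf \<Rightarrow> bool" where
  "qsat A M T (Cl \<alpha>) = (\<forall>s\<in>T. M \<alpha> s)"
| "qsat A M T (Tl \<phi>) = (\<not> qsat A M T \<phi>)"
| "qsat A M T (Imp \<phi> \<psi>) = (qsat A M T \<phi> \<longrightarrow> qsat A M T \<psi>)"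
| "qsat A M T (Lolli \<phi> \<psi>) = (\<forall>S U. S \<union> U = T \<longrightarrow> qsat A M S \<phi> \<longrightarrow> qsat A M U \<psi>)"
| "qsat A M T (TAll x \<phi>) = qsat A M (dup A x T) \<phi>"
| "qsat A M T (Shriek x \<phi>) = (\<forall>f. supfun A T f \<longrightarrow> qsat A M (supp x f T) \<phi>)"

definition qand :: "'b qf \<Rightarrow> 'b qf \<Rightarrow> 'b qf" where
  "qand \<phi> \<psi> = Tl (Imp \<phi> (Tl \<psi>))"

definition qiff :: "'b qf \<Rightarrow> 'b qf \<Rightarrow> 'b qf" where
  "qiff \<phi> \<psi> = qand (Imp \<phi> \<psi>) (Imp \<psi> \<phi>)"

definition qex :: "var \<Rightarrow> 'b qf \<Rightarrow> 'b qf" where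
  "qex x \<phi> = Tl (Shriek x (Tl \<phi>))"

definition tensor :: "'b qf \<Rightarrow> 'b qf \<Rightarrow> 'b qf" where
  "tensor \<phi> \<psi> = Tl (Lolli \<phi> (Tl \<psi>))"

inductive Qder :: "('b \<Rightarrow> 'b) \<Rightarrow> (var \<Rightarrow> 'b \<Rightarrow> 'b) \<Rightarrow> 'b qf \<Rightarrow> bool"
  for bneg :: "'b \<Rightarrow> 'b" and ball :: "var \<Rightarrow> 'b \<Rightarrow> 'b" where
  LinAll: "Qder bneg ball (qiff (TAll x (Tl \<phi>)) (Tl (TAll x \<phi>)))"
| FEx: "Qder bneg ball (qiff (qex x (Cl \<alpha>)) (Cl (bneg (ball x (bneg \<alpha>)))))"
| DExTensor: "Qder bneg ball (qiff (qex x (tensor \<phi> \<psi>)) (tensor (qex x \<phi>) (qex x \<psi>)))"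
| EAll: "Qder bneg ball (Imp (TAll x (Cl \<alpha>)) (Shriek x (Cl \<alpha>)))"
| IAll: "Qder bneg ball (Imp (Shriek x \<psi>) (TAll x \<psi>))"
| DisAll: "Qder bneg ball (Imp (TAll x (Imp \<phi> \<psi>)) (Imp (TAll x \<phi>) (TAll x \<psi>)))"
| DisShriek: "Qder bneg ball (Imp (Shriek x (Imp \<phi> \<psi>)) (Imp (Shriek x \<phi>) (Shriek x \<psi>)))"
| Nec: "Qder bneg ball \<phi> \<Longrightarrow> Qder bneg ball (Shriek x \<phi>)"

datatype 'f trm = Var var | Fn 'f "'f trm list"

datatype ('f, 'r) fo =
    FEq "'f trm" "'f trm"
  | FRel 'r "'f trm list"
  | FNeg "('f, 'r) fo"
  | FConj "('f, 'r) fo" "('f, 'r) fo"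
  | FDisj "('f, 'r) fo" "('f, 'r) fo"
  | FEx var "('f, 'r) fo"
  | FAll var "('f, 'r) fo"

fun teval :: "('f \<Rightarrow> 'a list \<Rightarrow> 'a) \<Rightarrow> (var \<Rightarrow> 'a) \<Rightarrow> 'f trm \<Rightarrow> 'a" where
  "teval F s (Var v) = s v"
| "teval F s (Fn g ts) = F g (map (teval F s) ts)"

fun fosat :: "'a set \<Rightarrow> ('f \<Rightarrow> 'a list \<Rightarrow> 'a) \<Rightarrow> ('r \<Rightarrow> 'a list \<Rightarrow> bool)
    \<Rightarrow> ('f, 'r) fo \<Rightarrow> (var \<Rightarrow> 'a) \<Rightarrow> bool" where
  "fosat A F R (FEq t u) s = (teval F s t = teval F s u)"
| "fosat A F R (FRel r ts) s = R r (map (teval F s) ts)"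
| "fosat A F R (FNeg \<phi>) s = (\<not> fosat A F R \<phi> s)"
| "fosat A F R (FConj \<phi> \<psi>) s = (fosat A F R \<phi> s \<and> fosat A F R \<psi> s)"
| "fosat A F R (FDisj \<phi> \<psi>) s = (fosat A F R \<phi> s \<or> fosat A F R \<psi> s)"
| "fosat A F R (FEx x \<phi>) s = (\<exists>a\<in>A. fosat A F R \<phi> (s(x := a)))"
| "fosat A F R (FAll x \<phi>) s = (\<forall>a\<in>A. fosat A F R \<phi> (s(x := a)))"

definition fo_structure :: "'a set \<Rightarrow> ('f \<Rightarrow> 'a list \<Rightarrow> 'a) \<Rightarrow> bool" where
  "fo_structure A F = (A \<noteq> {} \<and> (\<forall>g xs. set xs \<subseteq> A \<longrightarrow> F g xs \<in> A))"

section \<open>Quantified Boolean formulas (domain {0,1} rendered as bool)\<close>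

datatype qbf =
    PV var
  | PNeg qbf
  | PConj qbf qbf
  | PDisj qbf qbf
  | PEx var qbf
  | PAll var qbf

fun qbfsat :: "qbf \<Rightarrow> (var \<Rightarrow> bool) \<Rightarrow> bool" where
  "qbfsat (PV v) s = s v"
| "qbfsat (PNeg \<phi>) s = (\<not> qbfsat \<phi> s)"
| "qbfsat (PConj \<phi> \<psi>) s = (qbfsat \<phi> s \<and> qbfsat \<psi> s)"
| "qbfsat (PDisj \<phi> \<psi>) s = (qbfsat \<phi> s \<or> qbfsat \<psi> s)"
| "qbfsat (PEx x \<phi>) s = (\<exists>b. qbfsat \<phi> (s(x := b)))"
| "qbfsat (PAll x \<phi>) s = (\<forall>b. qbfsat \<phi> (s(x := b)))"

end

theory Submission
  imports Defs
begin

text \<open>Strong negation and implication are Boolean at the level of teams, so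
  (Lin\<forall>), (Dis\<forall>), (Dis!) and the necessitation rule hold for purely propositional
  reasons. The remaining axioms are facts about supplementing functions: every
  supplement of T is a subteam of the duplicate T[A/x], and flat (classical)
  formulas are downward closed (E\<forall>); the constant supplement A is the duplicate itself
  (I\<forall>); for a flat formula a supplement is just a choice of witnesses (F\<exists>); and a
  split of a supplemented team lifts to a split of T with one supplement per part,
  and conversely supplements of the parts merge (D\<exists>\<otimes>).\<close>

lemma qsat_qand [simp]: "qsat A M T (qand \<phi> \<psi>) = (qsat A M T \<phi> \<and> qsat A M T \<psi>)"
  by (simp add: qand_def)

lemma qsat_qiff [simp]: "qsat A M T (qiff \<phi> \<psi>) = (qsat A M T \<phi> = qsat A M T \<psi>)"
  by (auto simp: qiff_def)

lemma qsat_qex [simp]: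
  "qsat A M T (qex x \<phi>) = (\<exists>f. supfun A T f \<and> qsat A M (supp x f T) \<phi>)"
  by (simp add: qex_def)

lemma qsat_tensor [simp]:
  "qsat A M T (tensor \<phi> \<psi>) = (\<exists>S U. S \<union> U = T \<and> qsat A M S \<phi> \<and> qsat A M U \<psi>)"
  by (auto simp: tensor_def)

lemma supp_subset_dup: "supfun A T f \<Longrightarrow> supp x f T \<subseteq> dup A x T"
  unfolding supfun_def supp_def dup_def by blast

lemma supfun_const: "A \<noteq> {} \<Longrightarrow> supfun A T (\<lambda>_. A)"
  unfolding supfun_def by simp

lemma supp_const_eq_dup: "supp x (\<lambda>_. A) T = dup A x T"
  unfolding supp_def dup_def by simp

lemma ex_supfun_flat_iff:
  "(\<exists>f. supfun A T f \<and> (\<forall>t\<in>supp x f T. P t)) \<longleftrightarrow> (\<forall>s\<in>T. \<exists>a\<in>A. P (s(x := a)))"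
proof
  assume "\<exists>f. supfun A T f \<and> (\<forall>t\<in>supp x f T. P t)"
  then show "\<forall>s\<in>T. \<exists>a\<in>A. P (s(x := a))"
    unfolding supfun_def supp_def by blast
next
  assume "\<forall>s\<in>T. \<exists>a\<in>A. P (s(x := a))"
  then obtain g where g: "\<And>s. s \<in> T \<Longrightarrow> g s \<in> A \<and> P (s(x := g s))" by metis
  have "supfun A T (\<lambda>s. {g s})" "\<forall>t\<in>supp x (\<lambda>s. {g s}) T. P t"
    using g unfolding supfun_def supp_def by auto
  then show "\<exists>f. supfun A T f \<and> (\<forall>t\<in>supp x f T. P t)" by blast
qed

lemma supp_restrict:
  assumes "supfun A T f" and "S \<subseteq> supp x f T"
  defines "T' \<equiv> {s \<in> T. \<exists>a\<in>f s. s(x := a) \<in> S}"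
    and "f' \<equiv> \<lambda>s. {a \<in> f s. s(x := a) \<in> S}"
  shows "supfun A T' f'" and "supp x f' T' = S"
proof -
  show "supfun A T' f'"
    using assms(1) unfolding supfun_def T'_def f'_def by blast
  have "S \<subseteq> supp x f' T'"
  proof
    fix t assume "t \<in> S"
    with assms(2) obtain s a where "t = s(x := a)" "s \<in> T" "a \<in> f s"
      unfolding supp_def by blast
    with \<open>t \<in> S\<close> show "t \<in> supp x f' T'"
      unfolding supp_def f'_def T'_def by blast
  qed
  then show "supp x f' T' = S"
    unfolding supp_def f'_def T'_def by blast
qed

lemma supp_split:
  assumes "supfun A T f" and "S \<union> U = supp x f T"
  obtains T1 f1 T2 f2 where "T1 \<union> T2 = T"
    and "supfun A T1 f1" "supp x f1 T1 = S" and "supfun A T2 f2" "supp x f2 T2 = U"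
proof -
  have cover: "T = {s \<in> T. \<exists>a\<in>f s. s(x := a) \<in> S} \<union> {s \<in> T. \<exists>a\<in>f s. s(x := a) \<in> U}"
    using assms unfolding supfun_def supp_def by blast
  show ?thesis
    using that[OF cover[symmetric]] supp_restrict[OF assms(1), of S x] supp_restrict[OF assms(1), of U x]
      assms(2) by blast
qed

lemma supp_merge:
  assumes "supfun A T1 f1" and "supfun A T2 f2"
  obtains f where "supfun A (T1 \<union> T2) f" and "supp x f (T1 \<union> T2) = supp x f1 T1 \<union> supp x f2 T2"
proof
  let ?f = "\<lambda>s. {a. s \<in> T1 \<and> a \<in> f1 s \<or> s \<in> T2 \<and> a \<in> f2 s}"
  show "supfun A (T1 \<union> T2) ?f"
    using assms unfolding supfun_def by blast
  show "supp x ?f (T1 \<union> T2) = supp x f1 T1 \<union> supp x f2 T2"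
    unfolding supp_def by blast
qed

lemma ex_supfun_split_iff:
  "(\<exists>f. supfun A T f \<and> (\<exists>S U. S \<union> U = supp x f T \<and> P S \<and> Q U)) \<longleftrightarrow>
   (\<exists>T1 T2. T1 \<union> T2 = T \<and> (\<exists>f. supfun A T1 f \<and> P (supp x f T1))
                        \<and> (\<exists>f. supfun A T2 f \<and> Q (supp x f T2)))"
proof
  assume "\<exists>f. supfun A T f \<and> (\<exists>S U. S \<union> U = supp x f T \<and> P S \<and> Q U)"
  then obtain f S U where "supfun A T f" "S \<union> U = supp x f T" "P S" "Q U" by blast
  moreover from \<open>supfun A T f\<close> \<open>S \<union> U = supp x f T\<close> obtain T1 f1 T2 f2
    where "T1 \<union> T2 = T" "supfun A T1 f1" "supp x f1 T1 = S" "supfun A T2 f2" "supp x f2 T2 = U"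
    by (rule supp_split)
  ultimately show "\<exists>T1 T2. T1 \<union> T2 = T \<and> (\<exists>f. supfun A T1 f \<and> P (supp x f T1))
                                \<and> (\<exists>f. supfun A T2 f \<and> Q (supp x f T2))"
    by blast
next
  assume "\<exists>T1 T2. T1 \<union> T2 = T \<and> (\<exists>f. supfun A T1 f \<and> P (supp x f T1))
                              \<and> (\<exists>f. supfun A T2 f \<and> Q (supp x f T2))"
  then obtain T1 T2 f1 f2 where "T1 \<union> T2 = T"
    "supfun A T1 f1" "P (supp x f1 T1)" "supfun A T2 f2" "Q (supp x f2 T2)" by blast
  moreover from \<open>supfun A T1 f1\<close> \<open>supfun A T2 f2\<close> obtain f
    where "supfun A (T1 \<union> T2) f" "supp x f (T1 \<union> T2) = supp x f1 T1 \<union> supp x f2 T2"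
    by (rule supp_merge)
  ultimately show "\<exists>f. supfun A T f \<and> (\<exists>S U. S \<union> U = supp x f T \<and> P S \<and> Q U)"
    by blast
qed

lemma Qder_sound:
  assumes "Qder bneg ball \<phi>" and "A \<noteq> {}"
    and dual_ball: "\<And>x \<alpha> s. M (bneg (ball x (bneg \<alpha>))) s \<longleftrightarrow> (\<exists>a\<in>A. M \<alpha> (s(x := a)))"
  shows "qsat A M T \<phi>"
  using assms(1)
proof (induction arbitrary: T)
  case (FEx x \<alpha>)
  show ?case
    using ex_supfun_flat_iff[of A T x "M \<alpha>"] by (simp add: dual_ball)
next
  case (DExTensor x \<phi> \<psi>)
  show ?case
    using ex_supfun_split_iff[of A T x "\<lambda>S. qsat A M S \<phi>" "\<lambda>U. qsat A M U \<psi>"] by simp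
next
  case (EAll x \<alpha>)
  show ?case
    using supp_subset_dup[of A T _ x] by auto
next
  case (IAll x \<psi>)
  have "supfun A T (\<lambda>_. A)"
    using \<open>A \<noteq> {}\<close> by (rule supfun_const)
  then show ?case
    by (metis qsat.simps(3,5,6) supp_const_eq_dup)
qed simp_all

theorem mainTheorem9:
  shows "(\<forall>(\<phi> :: ('f, 'r) fo qf) (A :: 'a set) (F :: 'f \<Rightarrow> 'a list \<Rightarrow> 'a)
            (R :: 'r \<Rightarrow> 'a list \<Rightarrow> bool) T.
            Qder FNeg FAll \<phi> \<longrightarrow> fo_structure A F \<longrightarrow> (\<forall>s\<in>T. \<forall>v. s v \<in> A) \<longrightarrow>
            qsat A (fosat A F R) T \<phi>)
       \<and> (\<forall>(\<phi> :: qbf qf) T. Qder PNeg PAll \<phi> \<longrightarrow> qsat (UNIV :: bool set) qbfsat T \<phi>)"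
proof (intro conjI allI impI)
  fix \<phi> :: "('f, 'r) fo qf" and A :: "'a set" and F :: "'f \<Rightarrow> 'a list \<Rightarrow> 'a"
    and R :: "'r \<Rightarrow> 'a list \<Rightarrow> bool" and T :: "(var \<Rightarrow> 'a) set"
  assume "Qder FNeg FAll \<phi>" and "fo_structure A F"
  then show "qsat A (fosat A F R) T \<phi>"
    by (intro Qder_sound[where bneg = FNeg and ball = FAll]) (auto simp: fo_structure_def)
next
  fix \<phi> :: "qbf qf" and T :: "(var \<Rightarrow> bool) set"
  assume "Qder PNeg PAll \<phi>"
  then show "qsat (UNIV :: bool set) qbfsat T \<phi>"
    by (intro Qder_sound[where bneg = PNeg and ball = PAll]) auto
qed

end
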